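(* Let $0<\epsilon<1$ and let $X^\epsilon$ be the solution of the initial value problem described in the context. Then there is a constant $C>0$ such that for every $\epsilon\in(0,1)$ and every $t\geq 0$, $$\int_{-\pi}^{+\pi}|X^\epsilon(x,t)|\,dx\leq \int_{-\pi}^{+\pi}|v_0^\epsilon(x)|\,dx\leq C.$$
   Context: Let $\mathcal{C}_b(\mathbb{R})$ denote the Banach space of bounded continuous real functions on $\mathbb{R}$ with the sup norm. For a real function $u$ set $u^+=\max(0,u)$, $u^-=\max(0,-u)$, so $u=u^+-u^-$, $|u|=u^++u^-$. For $0<\epsilon<1$ let $u^\epsilon:\mathbb{R}\times[0,\infty)\to\mathbb{R}$ be $2\pi$-periodic in $x$, with $t\mapsto u^\epsilon(\cdot,t)$ continuous from $[0,\infty)$ into $\mathcal{C}_b(\mathbb{R})$, and assume there is $M_1>0$ with $|u^\epsilon(x,t)|\leq M_1$ for all $\epsilon$, $x$, $t\geq0$. Let $v_0^\epsilon\in\mathcal{C}_b(\mathbb{R})$ be $2\pi$-periodic with $\sup_{\epsilon}\int_{-\pi}^{\pi}|v_0^\epsilon(x)|dx<\infty$. Let $X^\epsilon$ be the unique global $\mathcal{C}^1$ solution $t\mapsto X^\epsilon(\cdot,t)\in\mathcal{C}_b(\mathbb{R})$ of the linear ODE $$\frac{d}{dt}X^\epsilon(x,t)=\frac{1}{\epsilon}\big[X^\epsilon(x-\epsilon,t)u^{\epsilon+}(x-\epsilon,t)-X^\epsilon(x,t)|u^{\epsilon}(x,t)|+X^\epsilon(x+\epsilon,t)u^{\epsilon-}(x+\epsilon,t)\big],\quad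 X^\epsilon(x,0)=v_0^\epsilon(x).$$ *)

theory Defs
  imports "HOL-Analysis.Analysis"
begin

end

theory Submission
  imports Defs
begin

text \<open>First, \<open>X\<^sup>\<epsilon>(\<cdot>, t)\<close> stays \<open>2\<pi>\<close>-periodic: the difference
  \<open>X(x + 2\<pi>, t) - X(x, t)\<close> solves the same linear equation with zero initial data, and a
  solution of a linear equation whose right-hand side is bounded by \<open>K \<cdot> sup |D|\<close> vanishes,
  since on a time interval of length \<open>1/(2K)\<close> its supremum is at most half of itself.
  Second, for \<open>0 < h \<le> \<epsilon>/M\<^sub>1\<close> the explicit Euler step \<open>X + h X'\<close> is, pointwise, a combination with
  nonnegative weights of the values of \<open>X\<close> at \<open>x - \<epsilon>\<close>, \<open>x\<close>, \<open>x + \<epsilon>\<close>, so its absolute value is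
  bounded by \<open>|X| + h L|X|\<close> where \<open>L\<close> is the (mass-conserving) right-hand side; integrating over a
  period, the Euler step does not increase the \<open>L\<^sup>1\<close> norm. As the \<open>L\<^sup>1\<close> norm is Lipschitz on
  \<open>C\<^sub>b\<close> and \<open>X(t + h)\<close> differs from the Euler step by \<open>o(h)\<close>, the \<open>L\<^sup>1\<close> norm does not
  increase along the solution.\<close>

definition upwind :: "real \<Rightarrow> (real \<Rightarrow> real) \<Rightarrow> (real \<Rightarrow> real) \<Rightarrow> real \<Rightarrow> real" where
  "upwind \<epsilon> U f x = (1 / \<epsilon>) *
     (f (x - \<epsilon>) * max 0 (U (x - \<epsilon>)) - f x * \<bar>U x\<bar> + f (x + \<epsilon>) * max 0 (- U (x + \<epsilon>)))"

lemma abs_apply_bcontfun_le_norm: "\<bar>apply_bcontfun f x\<bar> \<le> norm (f :: 'a::topological_space \<Rightarrow>\<^sub>C real)"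
  using norm_bounded[of f x] by simp

lemma continuous_on_apply_bcontfun_comp [continuous_intros]:
  "continuous_on S g \<Longrightarrow> continuous_on S (\<lambda>x. apply_bcontfun f (g x))"
  by (rule continuous_on_compose2[OF continuous_on_apply_bcontfun[of UNIV f]]) auto

lemma has_real_derivative_apply_bcontfun:
  fixes f :: "real \<Rightarrow> ('a::topological_space \<Rightarrow>\<^sub>C real)"
  assumes "(f has_vector_derivative f') (at t within S)"
  shows "((\<lambda>s. apply_bcontfun (f s) y) has_real_derivative apply_bcontfun f' y) (at t within S)"
proof -
  have "bounded_linear (\<lambda>g::'a \<Rightarrow>\<^sub>C real. apply_bcontfun g y)"
    by (rule bounded_linear_intro[of _ 1]) (simp_all add: abs_apply_bcontfun_le_norm)
  from bounded_linear.has_vector_derivative[OF this assms] show ?thesis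
    by (simp add: has_real_derivative_iff_has_vector_derivative)
qed

lemma continuous_on_if_has_vector_derivative:
  assumes "\<And>t. t \<in> S \<Longrightarrow> (f has_vector_derivative f' t) (at t within S)"
  shows "continuous_on S f"
  using assms by (auto intro: has_vector_derivative_continuous simp: continuous_on_eq_continuous_within)

lemma integral_periodic_shift:
  fixes g :: "real \<Rightarrow> real"
  assumes cont: "continuous_on UNIV g" and per: "\<And>x. g (x + p) = g x" and c: "\<bar>c\<bar> \<le> p"
  shows "integral {a..a+p} (\<lambda>x. g (x + c)) = integral {a..a+p} g"
proof -
  have int: "g integrable_on {b..b'}" for b b'
    by (rule integrable_continuous_interval, rule continuous_on_subset[OF cont]) simp
  have shift: "integral {a..a+p} (\<lambda>x. g (x + d)) = integral {a..a+p} g" if d: "0 \<le> d" "d \<le> p" for d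
  proof -
    have "integral {a..a+p} (\<lambda>x. g (x + d)) = integral {a+d..a+p+d} g"
      using integral_shift_Icc_real[of a "a+p" g d] by (simp add: o_def add.commute)
    also have "\<dots> = integral {a+d..a+p} g + integral {a+p..a+p+d} g"
      using d int by (intro Henstock_Kurzweil_Integration.integral_combine[symmetric]) auto
    also have "integral {a+p..a+p+d} g = integral {a..a+d} (g \<circ> (+) p)"
      using integral_shift_Icc_real[of a "a+d" g p] by (simp add: add_ac)
    also have "g \<circ> (+) p = g"
      using per by (auto simp: add.commute)
    also have "integral {a+d..a+p} g + integral {a..a+d} g = integral {a..a+p} g"
      using d int by (subst add.commute, intro Henstock_Kurzweil_Integration.integral_combine) auto
    finally show ?thesis .
  qed
  show ?thesis
  proof (cases "c \<ge> 0")
    case True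
    then show ?thesis using c by (intro shift) auto
  next
    case False
    have "integral {a..a+p} (\<lambda>x. g (x + c)) = integral {a..a+p} (\<lambda>x. g (x + (c + p)))"
      using per[of "_ + c"] by (simp add: add_ac)
    also have "\<dots> = integral {a..a+p} g"
      using False c by (intro shift) auto
    finally show ?thesis .
  qed
qed

lemma integral_abs_lipschitz:
  fixes a b :: real
  assumes "a \<le> b"
  shows "(b - a)-lipschitz_on UNIV (\<lambda>f::real \<Rightarrow>\<^sub>C real. integral {a..b} (\<lambda>x. \<bar>f x\<bar>))"
proof (rule lipschitz_onI)
  have le: "integral {a..b} (\<lambda>x. \<bar>f x\<bar>) \<le> integral {a..b} (\<lambda>x. \<bar>g x\<bar>) + (b - a) * norm (f - g)"
    for f g :: "real \<Rightarrow>\<^sub>C real"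
  proof -
    have "integral {a..b} (\<lambda>x. \<bar>f x\<bar>) \<le> integral {a..b} (\<lambda>x. \<bar>g x\<bar> + norm (f - g))"
    proof (intro integral_le integrable_continuous_interval continuous_intros)
      fix x
      show "\<bar>f x\<bar> \<le> \<bar>g x\<bar> + norm (f - g)"
        using abs_apply_bcontfun_le_norm[of "f - g" x] by simp
    qed
    also have "\<dots> = integral {a..b} (\<lambda>x. \<bar>g x\<bar>) + (b - a) * norm (f - g)"
      using assms by (subst integral_add) (auto intro!: integrable_continuous_interval continuous_intros)
    finally show ?thesis .
  qed
  fix f g :: "real \<Rightarrow>\<^sub>C real"
  show "dist (integral {a..b} (\<lambda>x. \<bar>f x\<bar>)) (integral {a..b} (\<lambda>x. \<bar>g x\<bar>)) \<le> (b - a) * dist f g"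
    using le[of f g] le[of g f] by (simp add: dist_real_def dist_norm norm_minus_commute)
qed (use assms in simp)

lemma continuous_upper_right_Dini_nonpos_imp_le:
  fixes F :: "real \<Rightarrow> real"
  assumes cont: "continuous_on {a..b} F" and "a \<le> b"
    and Dini: "\<And>t \<eta>. t \<in> {a..<b} \<Longrightarrow> \<eta> > 0 \<Longrightarrow>
      \<exists>d>0. \<forall>h. 0 < h \<and> h < d \<longrightarrow> F (t + h) \<le> F t + \<eta> * h"
  shows "F b \<le> F a"
proof -
  have slope: "F b \<le> F a + \<eta> * (b - a)" if "\<eta> > 0" for \<eta>
  proof -
    define S where "S = {s \<in> {a..b}. F s \<le> F a + \<eta> * (s - a)}"
    have "closed S"
      unfolding S_def by (intro continuous_on_closed_Collect_le cont continuous_intros closed_atLeastAtMost)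
    moreover have "a \<in> S" "bdd_above S"
      using \<open>a \<le> b\<close> by (auto simp: S_def intro: bdd_aboveI[of _ b])
    ultimately have sup_in: "Sup S \<in> S"
      using closed_contains_Sup by blast
    have "Sup S = b"
    proof (rule ccontr)
      assume "Sup S \<noteq> b"
      with sup_in have c: "Sup S \<in> {a..<b}" by (auto simp: S_def)
      obtain d where "d > 0" and d: "\<And>h. 0 < h \<and> h < d \<Longrightarrow> F (Sup S + h) \<le> F (Sup S) + \<eta> * h"
        using Dini[OF c \<open>\<eta> > 0\<close>] by blast
      define h where "h = min (d/2) (b - Sup S)"
      have h: "0 < h" "h < d" "Sup S + h \<le> b" using \<open>d > 0\<close> c by (auto simp: h_def)
      with d[of h] sup_in have "Sup S + h \<in> S" by (auto simp: S_def algebra_simps)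
      then have "Sup S + h \<le> Sup S" using \<open>bdd_above S\<close> by (rule cSup_upper)
      then show False using h by simp
    qed
    then show ?thesis using sup_in by (simp add: S_def)
  qed
  show ?thesis
  proof (cases "a = b")
    case False
    show ?thesis
    proof (rule field_le_epsilon)
      fix e :: real assume "e > 0"
      with False \<open>a \<le> b\<close> show "F b \<le> F a + e"
        using slope[of "e / (b - a)"] by simp
    qed
  qed simp
qed

lemma lipschitz_nonincreasing_along_Euler_steps:
  fixes \<Phi> :: "'a::real_normed_vector \<Rightarrow> real" and x x' :: "real \<Rightarrow> 'a"
  assumes lip: "L-lipschitz_on UNIV \<Phi>"
    and deriv: "\<And>t. t \<ge> 0 \<Longrightarrow> (x has_vector_derivative x' t) (at t within {0..})"
    and step: "\<And>t h. t \<ge> 0 \<Longrightarrow> 0 < h \<Longrightarrow> h < \<delta> \<Longrightarrow> \<Phi> (x t + h *\<^sub>R x' t) \<le> \<Phi> (x t)"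
    and "\<delta> > 0" "t \<ge> 0"
  shows "\<Phi> (x t) \<le> \<Phi> (x 0)"
proof (rule continuous_upper_right_Dini_nonpos_imp_le[where F = "\<lambda>s. \<Phi> (x s)"])
  have "continuous_on {0..} x"
    using deriv by (intro continuous_on_if_has_vector_derivative) auto
  then show "continuous_on {0..t} (\<lambda>s. \<Phi> (x s))"
    by (intro continuous_on_compose2[OF lipschitz_on_continuous_on[OF lip]]) (auto elim: continuous_on_subset)
  fix s \<eta> :: real assume s: "s \<in> {0..<t}" and "\<eta> > 0"
  have "0 \<le> L" using lip by (rule lipschitz_on_nonneg)
  with \<open>\<eta> > 0\<close> have "\<eta> / (L + 1) > 0" by simp
  with deriv[of s] s obtain d where "d > 0" and d: "\<And>y. y \<in> {0..} \<Longrightarrow> norm (y - s) < d \<Longrightarrow>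
      norm (x y - x s - (y - s) *\<^sub>R x' s) \<le> \<eta> / (L + 1) * norm (y - s)"
    unfolding has_vector_derivative_def has_derivative_within_alt by force
  have "\<Phi> (x (s + h)) \<le> \<Phi> (x s) + \<eta> * h" if h: "0 < h" "h < min d \<delta>" for h
  proof -
    let ?r = "norm (x (s + h) - (x s + h *\<^sub>R x' s))"
    have "\<Phi> (x (s + h)) \<le> \<Phi> (x s + h *\<^sub>R x' s) + L * ?r"
      using lipschitz_on_normD[OF lip, of "x (s + h)" "x s + h *\<^sub>R x' s"] by simp
    also have "\<Phi> (x s + h *\<^sub>R x' s) \<le> \<Phi> (x s)"
      using step[of s h] s h by simp
    also have "L * ?r \<le> \<eta> * h"
    proof -
      have "?r \<le> \<eta> / (L + 1) * h"
        using d[of "s + h"] s h by (simp add: algebra_simps)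
      then have "L * ?r \<le> L / (L + 1) * (\<eta> * h)"
        using mult_left_mono[OF _ \<open>0 \<le> L\<close>] by fastforce
      also have "\<dots> \<le> \<eta> * h"
        using \<open>0 \<le> L\<close> \<open>\<eta> > 0\<close> h by (intro mult_left_le_one_le) auto
      finally show ?thesis .
    qed
    finally show ?thesis by simp
  qed
  moreover have "min d \<delta> > 0" using \<open>d > 0\<close> \<open>\<delta> > 0\<close> by simp
  ultimately show "\<exists>d>0. \<forall>h. 0 < h \<and> h < d \<longrightarrow> \<Phi> (x (s + h)) \<le> \<Phi> (x s) + \<eta> * h"
    by blast
qed (use \<open>t \<ge> 0\<close> in simp)

lemma linear_growth_ode_zero_propagates:
  fixes D Dp :: "real \<Rightarrow> 'a \<Rightarrow> real"
  assumes deriv: "\<And>s x. s \<in> {a..a + h} \<Longrightarrow> ((\<lambda>s. D s x) has_real_derivative Dp s x) (at s within {a..a + h})"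
    and growth: "\<And>s S x. s \<in> {a..a + h} \<Longrightarrow> (\<And>y. \<bar>D s y\<bar> \<le> S) \<Longrightarrow> \<bar>Dp s x\<bar> \<le> K * S"
    and bdd: "\<And>s x. s \<in> {a..a + h} \<Longrightarrow> \<bar>D s x\<bar> \<le> B"
    and init: "\<And>x. D a x = 0"
    and "0 \<le> K" and h: "0 < h" "2 * K * h \<le> 1" and s: "s \<in> {a..a + h}"
  shows "D s x = 0"
proof -
  define S where "S = Sup {\<bar>D s x\<bar> | s x. s \<in> {a..a + h}}"
  have le_S: "\<bar>D s x\<bar> \<le> S" if "s \<in> {a..a + h}" for s x
    unfolding S_def using that bdd by (intro cSup_upper) (auto intro!: bdd_aboveI[of _ B])
  have "0 \<le> S" using abs_ge_zero[of "D a undefined"] le_S[of a undefined] h by simp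
  have "\<bar>D s x\<bar> \<le> S / 2" if s: "s \<in> {a..a + h}" for s x
  proof -
    have "norm (D s x - D a x) \<le> K * S * norm (s - a)"
    proof (rule field_differentiable_bound[of "{a..a + h}" "\<lambda>s. D s x" "\<lambda>z. Dp z x"])
      fix z assume z: "z \<in> {a..a + h}"
      show "((\<lambda>s. D s x) has_field_derivative Dp z x) (at z within {a..a + h})"
        using deriv[OF z] .
      show "norm (Dp z x) \<le> K * S"
        using growth[OF z le_S[OF z]] by simp
    qed (use s h in auto)
    then have "\<bar>D s x\<bar> \<le> K * S * (s - a)" using init s by simp
    also have "\<dots> \<le> K * S * h"
      using s \<open>0 \<le> S\<close> \<open>0 \<le> K\<close> by (intro mult_left_mono) auto
    also have "\<dots> = (2 * K * h) * (S / 2)" by simp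
    also have "\<dots> \<le> S / 2" using h \<open>0 \<le> S\<close> \<open>0 \<le> K\<close> by (intro mult_left_le_one_le) auto
    finally show ?thesis .
  qed
  then have "S \<le> S / 2"
    unfolding S_def using h by (intro cSup_least) force+
  with le_S[OF s] show ?thesis using \<open>0 \<le> S\<close> by simp
qed

lemma linear_growth_ode_zero_solution:
  fixes D Dp :: "real \<Rightarrow> 'a \<Rightarrow> real"
  assumes deriv: "\<And>s x. s \<ge> 0 \<Longrightarrow> ((\<lambda>s. D s x) has_real_derivative Dp s x) (at s within {0..})"
    and growth: "\<And>s S x. s \<ge> 0 \<Longrightarrow> (\<And>y. \<bar>D s y\<bar> \<le> S) \<Longrightarrow> \<bar>Dp s x\<bar> \<le> K * S"
    and bdd: "\<And>T. \<exists>B. \<forall>s\<in>{0..T}. \<forall>x. \<bar>D s x\<bar> \<le> B"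
    and init: "\<And>x. D 0 x = 0"
    and "K > 0" "s \<ge> 0"
  shows "D s x = 0"
proof -
  define h where "h = 1 / (2 * K)"
  have h: "0 < h" "2 * K * h \<le> 1" using \<open>K > 0\<close> by (auto simp: h_def)
  have "\<forall>s\<in>{0..real n * h}. \<forall>x. D s x = 0" for n
  proof (induction n)
    case (Suc n)
    let ?a = "real n * h"
    have "0 \<le> ?a" using h by simp
    then have sub: "{?a..?a + h} \<subseteq> {0..}" by auto
    obtain B where B: "\<forall>s\<in>{0..?a + h}. \<forall>x. \<bar>D s x\<bar> \<le> B" using bdd by blast
    have "D s x = 0" if "s \<in> {?a..?a + h}" for s x
    proof (rule linear_growth_ode_zero_propagates[where D = D and Dp = Dp and B = B, OF _ _ _ _ _ h that])
      show "((\<lambda>s. D s x) has_real_derivative Dp s x) (at s within {?a..?a + h})"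
        if "s \<in> {?a..?a + h}" for s x
        using deriv[of s x] sub that by (meson has_field_derivative_subset subsetD atLeast_iff)
      show "\<bar>Dp s x\<bar> \<le> K * S" if "s \<in> {?a..?a + h}" "\<And>y. \<bar>D s y\<bar> \<le> S" for s S x
        by (rule growth[OF _ that(2)]) (use that(1) sub in blast)
      show "\<bar>D s x\<bar> \<le> B" if "s \<in> {?a..?a + h}" for s x
        using B that sub by (meson atLeastAtMost_iff atLeast_iff subsetD)
      show "D ?a x = 0" for x
        using Suc.IH \<open>0 \<le> ?a\<close> by simp
    qed (use \<open>K > 0\<close> in simp)
    with Suc show ?case by (fastforce simp: algebra_simps)
  qed (simp add: init)
  moreover obtain n where "s \<le> real n * h"
    using reals_Archimedean2[of "s / h"] h by (auto simp: pos_divide_less_eq dest: less_imp_le)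
  ultimately show ?thesis using \<open>s \<ge> 0\<close> by auto
qed

lemma continuous_on_upwind [continuous_intros]:
  fixes f U :: "real \<Rightarrow> real"
  assumes "continuous_on UNIV f" "continuous_on UNIV U"
  shows "continuous_on S (upwind \<epsilon> U f)"
proof -
  have shifted: "continuous_on S (\<lambda>x. g (x + c))" if "continuous_on UNIV g" for g :: "real \<Rightarrow> real" and c
    by (rule continuous_on_compose2[OF that]) (auto intro!: continuous_intros)
  show ?thesis
    unfolding upwind_def diff_conv_add_uminus[of _ \<epsilon>]
    by (intro continuous_intros shifted assms continuous_on_subset[OF assms(1)]
        continuous_on_subset[OF assms(2)]) auto
qed

lemma abs_upwind_le:
  assumes "0 < \<epsilon>" "\<And>y. \<bar>f y\<bar> \<le> S" "\<And>y. \<bar>U y\<bar> \<le> M"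
  shows "\<bar>upwind \<epsilon> U f x\<bar> \<le> 3 * M / \<epsilon> * S"
proof -
  have product_le: "\<bar>f y * w\<bar> \<le> S * M" if "\<bar>w\<bar> \<le> \<bar>U y\<bar>" for y w
    unfolding abs_mult using assms(2,3)[of y] that abs_ge_zero[of "f y"]
    by (intro mult_mono) linarith+
  have "\<bar>f (x - \<epsilon>) * max 0 (U (x - \<epsilon>)) - f x * \<bar>U x\<bar> + f (x + \<epsilon>) * max 0 (- U (x + \<epsilon>))\<bar>
      \<le> \<bar>f (x - \<epsilon>) * max 0 (U (x - \<epsilon>))\<bar> + \<bar>f x * \<bar>U x\<bar>\<bar> + \<bar>f (x + \<epsilon>) * max 0 (- U (x + \<epsilon>))\<bar>"
    by (rule order_trans[OF abs_triangle_ineq add_right_mono[OF abs_triangle_ineq4]])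
  also have "\<dots> \<le> 3 * (S * M)"
    using product_le[of "max 0 (U (x - \<epsilon>))" "x - \<epsilon>"] product_le[of "\<bar>U x\<bar>" x]
      product_le[of "max 0 (- U (x + \<epsilon>))" "x + \<epsilon>"] by (simp add: abs_ge_self abs_ge_minus_self)
  finally have "\<bar>upwind \<epsilon> U f x\<bar> \<le> 1 / \<epsilon> * (3 * (S * M))"
    using \<open>0 < \<epsilon>\<close> unfolding upwind_def abs_mult by (simp add: divide_right_mono)
  then show ?thesis by (simp add: mult_ac)
qed

lemma abs_add_upwind_le:
  assumes "0 < \<epsilon>" "0 \<le> h" "h * \<bar>U x\<bar> \<le> \<epsilon>"
  shows "\<bar>f x + h * upwind \<epsilon> U f x\<bar> \<le> \<bar>f x\<bar> + h * upwind \<epsilon> U (\<lambda>y. \<bar>f y\<bar>) x"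
proof -
  define k where "k = h / \<epsilon>"
  define p where "p = f (x - \<epsilon>) * max 0 (U (x - \<epsilon>))"
  define q where "q = f (x + \<epsilon>) * max 0 (- U (x + \<epsilon>))"
  define w where "w = 1 - k * \<bar>U x\<bar>"
  have "0 \<le> k" "0 \<le> w"
    using assms by (auto simp: k_def w_def field_simps)
  have "f x + h * upwind \<epsilon> U f x = f x * w + k * (p + q)"
    using assms by (simp add: upwind_def k_def p_def q_def w_def field_simps)
  also have "\<bar>\<dots>\<bar> \<le> \<bar>f x\<bar> * w + k * (\<bar>p\<bar> + \<bar>q\<bar>)"
  proof -
    have "\<bar>f x * w + k * (p + q)\<bar> \<le> \<bar>f x\<bar> * w + k * \<bar>p + q\<bar>"
      using abs_triangle_ineq[of "f x * w" "k * (p + q)"] \<open>0 \<le> k\<close> \<open>0 \<le> w\<close>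
      by (simp add: abs_mult)
    also have "\<dots> \<le> \<bar>f x\<bar> * w + k * (\<bar>p\<bar> + \<bar>q\<bar>)"
      using \<open>0 \<le> k\<close> by (simp add: abs_triangle_ineq mult_left_mono)
    finally show ?thesis .
  qed
  also have "\<dots> = \<bar>f x\<bar> + h * upwind \<epsilon> U (\<lambda>y. \<bar>f y\<bar>) x"
    using assms by (simp add: upwind_def k_def p_def q_def w_def abs_mult field_simps)
  finally show ?thesis .
qed

lemma integral_upwind_periodic:
  fixes f U :: "real \<Rightarrow> real"
  assumes cont: "continuous_on UNIV f" "continuous_on UNIV U"
    and per: "\<And>x. f (x + p) = f x" "\<And>x. U (x + p) = U x"
    and "0 < \<epsilon>" "\<epsilon> \<le> p"
  shows "integral {a..a+p} (upwind \<epsilon> U f) = 0"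
proof -
  define g1 where "g1 y = f y * max 0 (U y)" for y
  define g2 where "g2 y = f y * max 0 (- U y)" for y
  have cont_g: "continuous_on UNIV g1" "continuous_on UNIV g2"
    unfolding g1_def g2_def using cont by (auto intro!: continuous_intros)
  have per_g: "g1 (x + p) = g1 x" "g2 (x + p) = g2 x" for x
    unfolding g1_def g2_def per by simp_all
  have int: "g integrable_on {a..a+p}" if "continuous_on UNIV g" for g :: "real \<Rightarrow> real"
    by (rule integrable_continuous_interval, rule continuous_on_subset[OF that]) simp
  have int_shift: "(\<lambda>x. g (x + c)) integrable_on {a..a+p}" if "continuous_on UNIV g" for g :: "real \<Rightarrow> real" and c
    by (rule int, rule continuous_on_compose2[OF that]) (auto intro!: continuous_intros)
  have i1: "(\<lambda>x. g1 (x - \<epsilon>)) integrable_on {a..a+p}"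
    using int_shift[OF cont_g(1), of "- \<epsilon>"] by simp
  have i2: "(\<lambda>x. g2 (x + \<epsilon>)) integrable_on {a..a+p}"
    using int_shift[OF cont_g(2)] .
  have "\<bar>U y\<bar> = max 0 (U y) + max 0 (- U y)" for y by auto
  then have "upwind \<epsilon> U f = (\<lambda>x. (1 / \<epsilon>) * ((g1 (x - \<epsilon>) - g1 x) + (g2 (x + \<epsilon>) - g2 x)))"
    by (auto simp: upwind_def g1_def g2_def algebra_simps)
  then have "integral {a..a+p} (upwind \<epsilon> U f)
      = (1 / \<epsilon>) * ((integral {a..a+p} (\<lambda>x. g1 (x - \<epsilon>)) - integral {a..a+p} g1)
          + (integral {a..a+p} (\<lambda>x. g2 (x + \<epsilon>)) - integral {a..a+p} g2))"
    using i1 i2 int[OF cont_g(1)] int[OF cont_g(2)]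
    by (simp add: integral_add integral_diff integrable_diff)
  also have "\<dots> = 0"
    using integral_periodic_shift[OF cont_g(1) per_g(1), of "- \<epsilon>"]
      integral_periodic_shift[OF cont_g(2) per_g(2), of \<epsilon>] \<open>0 < \<epsilon>\<close> \<open>\<epsilon> \<le> p\<close> by simp
  finally show ?thesis .
qed

lemma integral_abs_add_upwind_le:
  fixes f U :: "real \<Rightarrow> real"
  assumes cont: "continuous_on UNIV f" "continuous_on UNIV U"
    and per: "\<And>x. f (x + p) = f x" "\<And>x. U (x + p) = U x"
    and U_bound: "\<And>x. \<bar>U x\<bar> \<le> M"
    and \<epsilon>: "0 < \<epsilon>" "\<epsilon> \<le> p" and "0 \<le> h" "h * M \<le> \<epsilon>"
  shows "integral {a..a+p} (\<lambda>x. \<bar>f x + h * upwind \<epsilon> U f x\<bar>) \<le> integral {a..a+p} (\<lambda>x. \<bar>f x\<bar>)"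
proof -
  have cont_abs: "continuous_on UNIV (\<lambda>x. \<bar>f x\<bar>)"
    using cont by (intro continuous_intros)
  have "integral {a..a+p} (\<lambda>x. \<bar>f x + h * upwind \<epsilon> U f x\<bar>)
      \<le> integral {a..a+p} (\<lambda>x. \<bar>f x\<bar> + h * upwind \<epsilon> U (\<lambda>y. \<bar>f y\<bar>) x)"
  proof (rule integral_le)
    fix x
    have "h * \<bar>U x\<bar> \<le> \<epsilon>"
      using mult_left_mono[OF U_bound[of x] \<open>0 \<le> h\<close>] \<open>h * M \<le> \<epsilon>\<close> by linarith
    then show "\<bar>f x + h * upwind \<epsilon> U f x\<bar> \<le> \<bar>f x\<bar> + h * upwind \<epsilon> U (\<lambda>y. \<bar>f y\<bar>) x"
      by (rule abs_add_upwind_le[OF \<open>0 < \<epsilon>\<close> \<open>0 \<le> h\<close>])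
  qed (use cont cont_abs in \<open>auto intro!: integrable_continuous_interval continuous_intros
        continuous_on_subset[OF cont(1)]\<close>)
  also have "\<dots> = integral {a..a+p} (\<lambda>x. \<bar>f x\<bar>) + h * integral {a..a+p} (upwind \<epsilon> U (\<lambda>y. \<bar>f y\<bar>))"
  proof -
    have "upwind \<epsilon> U (\<lambda>y. \<bar>f y\<bar>) integrable_on {a..a+p}"
      by (intro integrable_continuous_interval continuous_on_upwind cont_abs cont(2))
    moreover have "(\<lambda>x. \<bar>f x\<bar>) integrable_on {a..a+p}"
      by (intro integrable_continuous_interval continuous_on_subset[OF cont_abs]) simp
    ultimately show ?thesis
      using integrable_on_cmult_left[of "upwind \<epsilon> U (\<lambda>y. \<bar>f y\<bar>)" _ h] by (simp add: integral_add)
  qed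
  also have "integral {a..a+p} (upwind \<epsilon> U (\<lambda>y. \<bar>f y\<bar>)) = 0"
    using cont_abs cont(2) per \<epsilon> by (intro integral_upwind_periodic) auto
  finally show ?thesis by simp
qed

lemma upwind_solution_periodic:
  fixes U X X' :: "real \<Rightarrow> real \<Rightarrow>\<^sub>C real"
  assumes deriv: "\<And>t. t \<ge> 0 \<Longrightarrow> (X has_vector_derivative X' t) (at t within {0..})"
    and eq: "\<And>t x. t \<ge> 0 \<Longrightarrow> X' t x = upwind \<epsilon> (U t) (X t) x"
    and U_per: "\<And>t x. t \<ge> 0 \<Longrightarrow> U t (x + p) = U t x"
    and U_bound: "\<And>t x. t \<ge> 0 \<Longrightarrow> \<bar>U t x\<bar> \<le> M"
    and init_per: "\<And>x. X 0 (x + p) = X 0 x"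
    and "0 < \<epsilon>" "0 < M" "t \<ge> 0"
  shows "X t (x + p) = X t x"
proof -
  define D where "D s x = X s (x + p) - X s x" for s x
  have "D t x = 0"
  proof (rule linear_growth_ode_zero_solution[where D = D and Dp = "\<lambda>s. upwind \<epsilon> (U s) (D s)" and K = "3 * M / \<epsilon>"])
    fix s x :: real assume "s \<ge> 0"
    have "upwind \<epsilon> (U s) (X s) (x + p) - upwind \<epsilon> (U s) (X s) x = upwind \<epsilon> (U s) (D s) x"
      using U_per[OF \<open>s \<ge> 0\<close>, of "x - \<epsilon>"] U_per[OF \<open>s \<ge> 0\<close>, of "x + \<epsilon>"] U_per[OF \<open>s \<ge> 0\<close>, of x]
      by (simp add: upwind_def D_def algebra_simps)
    then show "((\<lambda>s. D s x) has_real_derivative upwind \<epsilon> (U s) (D s) x) (at s within {0..})"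
      unfolding D_def using eq[OF \<open>s \<ge> 0\<close>]
      by (metis DERIV_diff has_real_derivative_apply_bcontfun deriv[OF \<open>s \<ge> 0\<close>])
  next
    fix s S x :: real assume "s \<ge> 0" "\<And>y. \<bar>D s y\<bar> \<le> S"
    then show "\<bar>upwind \<epsilon> (U s) (D s) x\<bar> \<le> 3 * M / \<epsilon> * S"
      using U_bound \<open>0 < \<epsilon>\<close> by (intro abs_upwind_le) auto
  next
    fix T :: real
    have "continuous_on {0..} X"
      using deriv by (intro continuous_on_if_has_vector_derivative) auto
    then have "continuous_on {0..T} X"
      by (rule continuous_on_subset) auto
    then obtain B where B: "\<And>s. s \<in> {0..T} \<Longrightarrow> norm (X s) \<le> B"
      using compact_continuous_image[OF _ compact_Icc] compact_imp_bounded
      by (metis bounded_iff imageI)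
    have "\<bar>D s x\<bar> \<le> 2 * B" if "s \<in> {0..T}" for s x
      using abs_apply_bcontfun_le_norm[of "X s" "x + p"] abs_apply_bcontfun_le_norm[of "X s" x] B[OF that]
      unfolding D_def by linarith
    then show "\<exists>B. \<forall>s\<in>{0..T}. \<forall>x. \<bar>D s x\<bar> \<le> B" by blast
  qed (use init_per \<open>0 < \<epsilon>\<close> \<open>0 < M\<close> \<open>t \<ge> 0\<close> in \<open>auto simp: D_def\<close>)
  then show ?thesis by (simp add: D_def)
qed

lemma upwind_solution_integral_abs_nonincreasing:
  fixes U X X' :: "real \<Rightarrow> real \<Rightarrow>\<^sub>C real"
  assumes deriv: "\<And>t. t \<ge> 0 \<Longrightarrow> (X has_vector_derivative X' t) (at t within {0..})"
    and eq: "\<And>t x. t \<ge> 0 \<Longrightarrow> X' t x = upwind \<epsilon> (U t) (X t) x"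
    and U_per: "\<And>t x. t \<ge> 0 \<Longrightarrow> U t (x + p) = U t x"
    and U_bound: "\<And>t x. t \<ge> 0 \<Longrightarrow> \<bar>U t x\<bar> \<le> M"
    and init_per: "\<And>x. X 0 (x + p) = X 0 x"
    and \<epsilon>: "0 < \<epsilon>" "\<epsilon> \<le> p" and "0 < M" "t \<ge> 0"
  shows "integral {a..a+p} (\<lambda>x. \<bar>X t x\<bar>) \<le> integral {a..a+p} (\<lambda>x. \<bar>X 0 x\<bar>)"
proof (rule lipschitz_nonincreasing_along_Euler_steps[OF integral_abs_lipschitz deriv])
  fix s h :: real assume "s \<ge> 0" "0 < h" "h < \<epsilon> / M"
  have "integral {a..a+p} (\<lambda>x. \<bar>X s x + h * upwind \<epsilon> (U s) (X s) x\<bar>) \<le> integral {a..a+p} (\<lambda>x. \<bar>X s x\<bar>)"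
  proof (rule integral_abs_add_upwind_le)
    show "X s (x + p) = X s x" for x
      using upwind_solution_periodic[OF deriv eq U_per U_bound init_per] \<epsilon> \<open>0 < M\<close> \<open>s \<ge> 0\<close> by blast
    show "h * M \<le> \<epsilon>" using \<open>h < \<epsilon> / M\<close> \<open>0 < M\<close> by (simp add: less_divide_eq)
  qed (use U_per U_bound \<open>s \<ge> 0\<close> \<open>0 < h\<close> \<epsilon> in auto)
  then show "integral {a..a+p} (\<lambda>x. \<bar>(X s + h *\<^sub>R X' s) x\<bar>) \<le> integral {a..a+p} (\<lambda>x. \<bar>X s x\<bar>)"
    using eq[OF \<open>s \<ge> 0\<close>] by simp
qed (use \<epsilon> \<open>0 < M\<close> \<open>t \<ge> 0\<close> in auto)

theorem lemma1:
  fixes u :: "real \<Rightarrow> real \<Rightarrow> (real \<Rightarrow>\<^sub>C real)"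
    and v0 :: "real \<Rightarrow> (real \<Rightarrow>\<^sub>C real)"
    and X :: "real \<Rightarrow> real \<Rightarrow> (real \<Rightarrow>\<^sub>C real)"
    and M1 :: real
  assumes u_per: "\<And>\<epsilon> t x. 0 < \<epsilon> \<Longrightarrow> \<epsilon> < 1 \<Longrightarrow> 0 \<le> t \<Longrightarrow>
      apply_bcontfun (u \<epsilon> t) (x + 2 * pi) = apply_bcontfun (u \<epsilon> t) x"
    and u_cont: "\<And>\<epsilon>. 0 < \<epsilon> \<Longrightarrow> \<epsilon> < 1 \<Longrightarrow> continuous_on {0..} (u \<epsilon>)"
    and M1_pos: "M1 > 0"
    and u_bound: "\<And>\<epsilon> t x. 0 < \<epsilon> \<Longrightarrow> \<epsilon> < 1 \<Longrightarrow> 0 \<le> t \<Longrightarrow>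
      \<bar>apply_bcontfun (u \<epsilon> t) x\<bar> \<le> M1"
    and v0_per: "\<And>\<epsilon> x. 0 < \<epsilon> \<Longrightarrow> \<epsilon> < 1 \<Longrightarrow>
      apply_bcontfun (v0 \<epsilon>) (x + 2 * pi) = apply_bcontfun (v0 \<epsilon>) x"
    and v0_L1: "bdd_above ((\<lambda>\<epsilon>. integral {-pi..pi} (\<lambda>x. \<bar>apply_bcontfun (v0 \<epsilon>) x\<bar>)) ` {0<..<1})"
    and X_init: "\<And>\<epsilon>. 0 < \<epsilon> \<Longrightarrow> \<epsilon> < 1 \<Longrightarrow> X \<epsilon> 0 = v0 \<epsilon>"
    and X_ode: "\<And>\<epsilon>. 0 < \<epsilon> \<Longrightarrow> \<epsilon> < 1 \<Longrightarrow>
      \<exists>X' :: real \<Rightarrow> (real \<Rightarrow>\<^sub>C real).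
        continuous_on {0..} X' \<and>
        (\<forall>t\<ge>0. (X \<epsilon> has_vector_derivative X' t) (at t within {0..})) \<and>
        (\<forall>t\<ge>0. \<forall>x. apply_bcontfun (X' t) x =
           (1 / \<epsilon>) * (apply_bcontfun (X \<epsilon> t) (x - \<epsilon>) * max 0 (apply_bcontfun (u \<epsilon> t) (x - \<epsilon>))
             - apply_bcontfun (X \<epsilon> t) x * \<bar>apply_bcontfun (u \<epsilon> t) x\<bar>
             + apply_bcontfun (X \<epsilon> t) (x + \<epsilon>) * max 0 (- apply_bcontfun (u \<epsilon> t) (x + \<epsilon>))))"
  shows "\<exists>C > 0. \<forall>\<epsilon> \<in> {0<..<1}. \<forall>t \<ge> 0.
      integral {-pi..pi} (\<lambda>x. \<bar>apply_bcontfun (X \<epsilon> t) x\<bar>)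
        \<le> integral {-pi..pi} (\<lambda>x. \<bar>apply_bcontfun (v0 \<epsilon>) x\<bar>) \<and>
      integral {-pi..pi} (\<lambda>x. \<bar>apply_bcontfun (v0 \<epsilon>) x\<bar>) \<le> C"
proof -
  obtain C where C: "\<And>\<epsilon>. \<epsilon> \<in> {0<..<1} \<Longrightarrow> integral {-pi..pi} (\<lambda>x. \<bar>apply_bcontfun (v0 \<epsilon>) x\<bar>) \<le> C"
    using v0_L1 unfolding bdd_above_def by blast
  have "integral {-pi..pi} (\<lambda>x. \<bar>X \<epsilon> t x\<bar>) \<le> integral {-pi..pi} (\<lambda>x. \<bar>v0 \<epsilon> x\<bar>)"
    if \<epsilon>: "0 < \<epsilon>" "\<epsilon> < 1" and "0 \<le> t" for \<epsilon> t
  proof -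
    obtain X' where deriv: "\<And>t. t \<ge> 0 \<Longrightarrow> (X \<epsilon> has_vector_derivative X' t) (at t within {0..})"
      and eq: "\<And>t x. t \<ge> 0 \<Longrightarrow> X' t x = upwind \<epsilon> (u \<epsilon> t) (X \<epsilon> t) x"
      using X_ode[OF \<epsilon>] unfolding upwind_def by blast
    have "integral {-pi..-pi + 2*pi} (\<lambda>x. \<bar>X \<epsilon> t x\<bar>) \<le> integral {-pi..-pi + 2*pi} (\<lambda>x. \<bar>X \<epsilon> 0 x\<bar>)"
      using u_per[OF \<epsilon>] u_bound[OF \<epsilon>] v0_per[OF \<epsilon>] X_init[OF \<epsilon>] \<epsilon> M1_pos \<open>0 \<le> t\<close> pi_gt3
      by (intro upwind_solution_integral_abs_nonincreasing[where M = M1, OF deriv eq]) auto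
    then show ?thesis using X_init[OF \<epsilon>] by simp
  qed
  then show ?thesis
    using C by (intro exI[of _ "max 1 C"]) (auto simp: le_max_iff_disj)
qed

end
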